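(* Let $\mathcal M=(G,In,Out,Leak)$ be a strongly connected linear compartmental model with $|In|=|Out|=1$. Let $n$ be the number of compartments and $L$ the length of a shortest directed path in $G$ from the input compartment to the output compartment. In the input-output equation $\det(\partial I-A)y_i=(-1)^{i+j}\det((\partial I-A)^{j,i})u_j$ (with $In=\{j\}$, $Out=\{i\}$), the number of non-constant coefficients on the left-hand side is $n$ if $Leak\ne\emptyset$ and $n-1$ if $Leak=\emptyset$; the number of non-constant coefficients on the right-hand side is $n-1$ if $In=Out$ and $n-L$ if $In\ne Out$.
   Context: A linear compartmental model $\mathcal M=(G,In,Out,Leak)$ consists of a finite directed graph $G=(V_G,E_G)$ without multi-edges, compartments $V_G=\{1,\dots,n\}$, and subsets $In,Out,Leak\subseteq V_G$; edge $k\to \ell$ carries parameter $a_{\ell k}$ and each $\ell\in Leak$ carries $a_{0\ell}$ (independent indeterminates). The compartmental matrix $A$ has $A_{\ell\ell}=-\sum_{k:\,\ell\to k\in E_G}a_{k\ell}$ (minus $a_{0\ell}$ if $\ell\in Leak$), $A_{\ell k}=a_{\ell k}$ if $k\to\ell\in E_G$, $0$ otherwise. $B^{p,q}$ denotes $B$ with row $p$ and column $q$ removed, and $\partial I$ is the diagonal matrix with entries $d/dt$. The equation is viewed as a polynomial in $y_i,u_j$ and their derivatives, whose coefficients are polynomials in the parameters; "non-constant" refers to these polynomials. *)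

theory Defs
  imports "HOL-Library.Poly_Mapping" "HOL-Computational_Algebra.Polynomial"
    "Jordan_Normal_Form.Determinant"
begin

text \<open>Parameters of a linear compartmental model: EdgeP l k is a_{l k} (edge k -> l),
  LeakP l is a_{0 l}.\<close>
datatype param = EdgeP nat nat | LeakP nat

type_synonym ppoly = "(param \<Rightarrow>\<^sub>0 nat) \<Rightarrow>\<^sub>0 int"

definition pvar :: "param \<Rightarrow> ppoly" where
  "pvar p = Poly_Mapping.single (Poly_Mapping.single p 1) 1"

definition nonconst :: "ppoly \<Rightarrow> bool" where
  "nonconst c \<longleftrightarrow> (\<exists>m. m \<noteq> 0 \<and> Poly_Mapping.lookup c m \<noteq> 0)"

text \<open>Compartmental matrix; compartments are 0..<n, E is the edge set (pairs (k,l) for k -> l).\<close>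
definition comp_matrix :: "nat \<Rightarrow> (nat \<times> nat) set \<Rightarrow> nat set \<Rightarrow> ppoly mat" where
  "comp_matrix n E Lk = mat n n (\<lambda>(l,k).
     if l = k then
       - (\<Sum>k'\<in>{k'. (l,k') \<in> E}. pvar (EdgeP k' l)) - (if l \<in> Lk then pvar (LeakP l) else 0)
     else if (k,l) \<in> E then pvar (EdgeP l k) else 0)"

text \<open>The operator matrix dI - A, with the derivative operator d represented by the
  polynomial variable.\<close>
definition op_matrix :: "nat \<Rightarrow> (nat \<times> nat) set \<Rightarrow> nat set \<Rightarrow> ppoly poly mat" where
  "op_matrix n E Lk = mat n n (\<lambda>(l,k).
     (if l = k then monom 1 1 else 0) - [: comp_matrix n E Lk $$ (l,k) :])"

definition num_nonconst :: "ppoly poly \<Rightarrow> nat" where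
  "num_nonconst p = card {k. nonconst (coeff p k)}"

definition strongly_connected :: "nat \<Rightarrow> (nat \<times> nat) set \<Rightarrow> bool" where
  "strongly_connected n E \<longleftrightarrow> (\<forall>u<n. \<forall>v<n. (u,v) \<in> E\<^sup>*)"

definition shortest_path_len :: "(nat \<times> nat) set \<Rightarrow> nat \<Rightarrow> nat \<Rightarrow> nat" where
  "shortest_path_len E u v = (LEAST k. (u,v) \<in> E ^^ k)"

end

(*
  The left-hand side det(dI - A) is the characteristic polynomial of A, hence monic of degree n.
  For In = Out the right-hand side is the cofactor at (i,i), the characteristic polynomial of a
  principal (n-1)x(n-1) submatrix.  For In /= Out, expand the cofactor (the determinant with row
  j replaced by the unit row at i) over permutations p: only fixed points contribute a factor d,
  and every moved point l uses an entry a_(l, p l) along an edge p l -> l, so it raises the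
  distance from j by at most one.  As p j = i, at least L points move and the degree is at most
  n - 1 - L.

  A coefficient is non-constant as soon as two parameter specialisations give it different
  values.  At the zero point dI - A becomes dI.  At a spanning in-tree rooted at i (or at a leak
  compartment) with unit rates, dI - A is triangular with respect to depth, its determinant is
  (d + c)(d + 1)^(n-1), and the identity adj(M) M = det(M) I read along column x gives
  (d + 1) cof(x) = cof(parent x), so the cofactor at (x, root) is (d + 1)^(n-1-depth x).
  Comparing the two specialisations coefficientwise shows that every coefficient below the
  degree bound is non-constant, except the constant term of det(dI - A) in the absence of
  leaks, which vanishes because the columns of A then sum to zero.
*)

theory Submission
  imports Defs "Jordan_Normal_Form.Char_Poly"
begin

section \<open>Evaluating parameter polynomials\<close>

definition monomial_eval :: "(param \<Rightarrow> int) \<Rightarrow> (param \<Rightarrow>\<^sub>0 nat) \<Rightarrow> int" where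
  "monomial_eval v m = (\<Prod>p\<in>Poly_Mapping.keys m. v p ^ Poly_Mapping.lookup m p)"

definition ppoly_eval :: "(param \<Rightarrow> int) \<Rightarrow> ppoly \<Rightarrow> int" where
  "ppoly_eval v c = (\<Sum>m\<in>Poly_Mapping.keys c. Poly_Mapping.lookup c m * monomial_eval v m)"

lemma monomial_eval_superset:
  "finite S \<Longrightarrow> Poly_Mapping.keys m \<subseteq> S \<Longrightarrow>
    monomial_eval v m = (\<Prod>p\<in>S. v p ^ Poly_Mapping.lookup m p)"
  unfolding monomial_eval_def by (rule prod.mono_neutral_left) (auto simp: in_keys_iff)

lemma monomial_eval_add: "monomial_eval v (m + m') = monomial_eval v m * monomial_eval v m'"
proof -
  let ?S = "Poly_Mapping.keys m \<union> Poly_Mapping.keys m'"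
  show ?thesis
    by (simp add: monomial_eval_superset[OF _ keys_add] monomial_eval_superset[of ?S]
        lookup_add power_add prod.distrib)
qed

lemma monomial_eval_0 [simp]: "monomial_eval v 0 = 1"
  unfolding monomial_eval_def by (simp only: keys_zero prod.empty)

lemma ppoly_eval_superset:
  "finite S \<Longrightarrow> Poly_Mapping.keys c \<subseteq> S \<Longrightarrow>
    ppoly_eval v c = (\<Sum>m\<in>S. Poly_Mapping.lookup c m * monomial_eval v m)"
  unfolding ppoly_eval_def by (rule sum.mono_neutral_left) (auto simp: in_keys_iff)

lemma ppoly_eval_add: "ppoly_eval v (c + d) = ppoly_eval v c + ppoly_eval v d"
proof -
  let ?S = "Poly_Mapping.keys c \<union> Poly_Mapping.keys d"
  show ?thesis
    by (simp add: ppoly_eval_superset[OF _ keys_add] ppoly_eval_superset[of ?S]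
        lookup_add distrib_right sum.distrib)
qed

lemma ppoly_eval_0 [simp]: "ppoly_eval v 0 = 0"
  by (simp add: ppoly_eval_def)

lemma ppoly_eval_1: "ppoly_eval v 1 = 1"
  by (simp add: ppoly_eval_def)

lemma ppoly_eval_single: "ppoly_eval v (Poly_Mapping.single m a) = a * monomial_eval v m"
  by (cases "a = 0") (auto simp: ppoly_eval_def)

lemma ppoly_eval_sum: "ppoly_eval v (sum f S) = (\<Sum>x\<in>S. ppoly_eval v (f x))"
  by (induct S rule: infinite_finite_induct) (auto simp: ppoly_eval_add)

lemma poly_mapping_sum_single:
  "(c :: 'a \<Rightarrow>\<^sub>0 'b::comm_monoid_add) =
    (\<Sum>m\<in>Poly_Mapping.keys c. Poly_Mapping.single m (Poly_Mapping.lookup c m))"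
  by (rule poly_mapping_eqI)
    (simp add: lookup_sum lookup_single when_def in_keys_iff sum.delta'[unfolded in_keys_iff])

lemma ppoly_eval_mult: "ppoly_eval v (c * d) = ppoly_eval v c * ppoly_eval v d"
proof -
  have "ppoly_eval v (c * d) =
    ppoly_eval v ((\<Sum>m\<in>Poly_Mapping.keys c. Poly_Mapping.single m (Poly_Mapping.lookup c m)) *
      (\<Sum>m\<in>Poly_Mapping.keys d. Poly_Mapping.single m (Poly_Mapping.lookup d m)))"
    using poly_mapping_sum_single[of c] poly_mapping_sum_single[of d] by simp
  also have "\<dots> = (\<Sum>m\<in>Poly_Mapping.keys c. \<Sum>m'\<in>Poly_Mapping.keys d.
      Poly_Mapping.lookup c m * monomial_eval v m *
      (Poly_Mapping.lookup d m' * monomial_eval v m'))"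
    by (simp add: sum_product ppoly_eval_sum mult_single ppoly_eval_single monomial_eval_add
        mult_ac)
  also have "\<dots> = ppoly_eval v c * ppoly_eval v d"
    by (simp add: ppoly_eval_def sum_product)
  finally show ?thesis .
qed

interpretation ppoly_eval: comm_ring_hom "ppoly_eval v"
  by unfold_locales (auto simp: ppoly_eval_mult ppoly_eval_add ppoly_eval_1)

interpretation ppoly_eval_poly: map_poly_comm_ring_hom "ppoly_eval v" ..

lemma ppoly_eval_pvar [simp]: "ppoly_eval v (pvar p) = v p"
  by (simp add: pvar_def ppoly_eval_single monomial_eval_def)

lemma ppoly_eval_if_not_nonconst:
  assumes "\<not> nonconst c"
  shows "ppoly_eval v c = Poly_Mapping.lookup c 0"
proof -
  have "Poly_Mapping.keys c \<subseteq> {0}" using assms by (auto simp: nonconst_def in_keys_iff)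
  then have "ppoly_eval v c = (\<Sum>m\<in>{0}. Poly_Mapping.lookup c m * monomial_eval v m)"
    by (intro ppoly_eval_superset) auto
  also have "\<dots> = Poly_Mapping.lookup c 0"
    by simp
  finally show ?thesis .
qed

lemma nonconst_coeff_if_evals_differ:
  assumes "coeff (map_poly (ppoly_eval v) p) k \<noteq> coeff (map_poly (ppoly_eval w) p) k"
  shows "nonconst (coeff p k)"
proof (rule ccontr)
  assume "\<not> nonconst (coeff p k)"
  then have "ppoly_eval u (coeff p k) = Poly_Mapping.lookup (coeff p k) 0" for u
    by (rule ppoly_eval_if_not_nonconst)
  then show False
    using assms by (simp add: coeff_map_poly)
qed

lemma not_nonconst_0 [simp]: "\<not> nonconst 0"
  by (simp add: nonconst_def)

lemma not_nonconst_1 [simp]: "\<not> nonconst 1"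
  by (simp add: nonconst_def lookup_one)

lemma num_nonconst_eqI:
  assumes "\<And>k. nonconst (coeff p k) \<longleftrightarrow> a \<le> k \<and> k < b"
  shows "num_nonconst p = b - a"
proof -
  have "{k. nonconst (coeff p k)} = {a..<b}" by (simp add: set_eq_iff assms)
  then show ?thesis by (simp add: num_nonconst_def)
qed

section \<open>Determinants via permutations and cofactors\<close>

lemma permutes_eq_id_if_rank_increasing:
  fixes r :: "'a \<Rightarrow> nat"
  assumes p: "p permutes S" and S: "finite S"
    and incr: "\<And>x. x \<in> S \<Longrightarrow> p x \<noteq> x \<Longrightarrow> r x < r (p x)"
  shows "p = id"
proof (rule ccontr)
  assume "p \<noteq> id"
  then obtain x0 where moved: "p x0 \<noteq> x0" by (auto simp: fun_eq_iff)
  then have "x0 \<in> S" using p by (meson permutes_not_in)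
  have "r x \<le> r (p x)" if "x \<in> S" for x
    using incr[OF that] by (cases "p x = x") auto
  then have "(\<Sum>x\<in>S. r x) < (\<Sum>x\<in>S. r (p x))"
    using S incr moved \<open>x0 \<in> S\<close> by (intro sum_strict_mono_ex1) auto
  also have "\<dots> = (\<Sum>x\<in>S. r x)"
    using sum.permute[OF p, of r] by (simp add: comp_def)
  finally show False by simp
qed

lemma det_eq_prod_diag_if_rank_increasing:
  fixes M :: "'a::comm_ring_1 mat" and r :: "nat \<Rightarrow> nat"
  assumes M: "M \<in> carrier_mat n n"
    and incr: "\<And>a b. a < n \<Longrightarrow> b < n \<Longrightarrow> a \<noteq> b \<Longrightarrow> M $$ (a,b) \<noteq> 0 \<Longrightarrow> r a < r b"
  shows "det M = (\<Prod>l = 0..<n. M $$ (l,l))"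
proof -
  have vanish: "(\<Prod>l = 0..<n. M $$ (l, p l)) = 0" if p: "p permutes {0..<n}" and "p \<noteq> id" for p
  proof (rule ccontr)
    assume "(\<Prod>l = 0..<n. M $$ (l, p l)) \<noteq> 0"
    then have "M $$ (l, p l) \<noteq> 0" if "l < n" for l
      using that by (metis atLeastLessThan_iff finite_atLeastLessThan le0 prod_zero)
    then have "p = id"
      using incr permutes_in_image[OF p]
      by (intro permutes_eq_id_if_rank_increasing[OF p, where r = r]) auto
    with \<open>p \<noteq> id\<close> show False ..
  qed
  have "det M = (\<Sum>p\<in>{p. p permutes {0..<n}}. signof p * (\<Prod>l = 0..<n. M $$ (l, p l)))"
    by (rule det_def'[OF M])
  also have "\<dots> = signof (id :: nat \<Rightarrow> nat) * (\<Prod>l = 0..<n. M $$ (l, id l))"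
    by (subst sum.remove[of _ id]) (auto simp: permutes_id finite_permutations vanish)
  finally show ?thesis by simp
qed

lemma sum_col_mult_cofactor:
  fixes M :: "'a::comm_ring_1 mat"
  assumes M: "M \<in> carrier_mat n n" and b: "b < n" and i: "i < n"
  shows "(\<Sum>a<n. M $$ (a,b) * cofactor M a i) = (if i = b then det M else 0)"
proof -
  have "(adj_mat M * M) $$ (i,b) = (det M \<cdot>\<^sub>m 1\<^sub>m n) $$ (i,b)"
    using adj_mat(3)[OF M] by simp
  moreover have "(adj_mat M * M) $$ (i,b) = (\<Sum>a<n. M $$ (a,b) * cofactor M a i)"
    using M b i by (auto simp: adj_mat_def scalar_prod_def mult.commute atLeast0LessThan
        intro!: sum.cong)
  ultimately show ?thesis using b i by simp
qed

lemma cofactor_smult_one_mat: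
  fixes a :: "'a::idom"
  assumes a: "a \<noteq> 0" and i: "i < n" and j: "j < n"
  shows "cofactor (a \<cdot>\<^sub>m 1\<^sub>m n) j i = (if j = i then a ^ (n - 1) else 0)"
proof -
  have "(\<Sum>b<n. (a \<cdot>\<^sub>m 1\<^sub>m n) $$ (b,j) * cofactor (a \<cdot>\<^sub>m 1\<^sub>m n) b i)
      = (\<Sum>b<n. if b = j then a * cofactor (a \<cdot>\<^sub>m 1\<^sub>m n) b i else 0)"
    using j by (intro sum.cong) auto
  also have "\<dots> = a * cofactor (a \<cdot>\<^sub>m 1\<^sub>m n) j i"
    using j by simp
  finally have "a * cofactor (a \<cdot>\<^sub>m 1\<^sub>m n) j i = (if i = j then a * a ^ (n - 1) else 0)"
    using sum_col_mult_cofactor[of "a \<cdot>\<^sub>m 1\<^sub>m n" n j i] i j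
    by (simp add: power_eq_if[of a n] split: if_splits)
  then show ?thesis using a by (auto split: if_splits)
qed

lemma det_eq_0_if_col_sums_0:
  fixes M :: "'a::comm_ring_1 mat"
  assumes M: "M \<in> carrier_mat n n" and n: "0 < n"
    and cols: "\<And>b. b < n \<Longrightarrow> (\<Sum>a<n. M $$ (a,b)) = 0"
  shows "det M = 0"
proof -
  define U :: "'a mat" where "U = mat n n (\<lambda>(a,b). if a = 0 \<or> a = b then 1 else 0)"
  have U: "U \<in> carrier_mat n n" by (simp add: U_def)
  have "det U = 1"
    by (subst det_eq_prod_diag_if_rank_increasing[OF U, where r = id])
      (auto simp: U_def split: if_splits)
  have "(U * M) $$ (0,b) = 0" if "b < n" for b
    using cols[OF that] M n that by (simp add: U_def scalar_prod_def atLeast0LessThan)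
  then have "det (U * M) = 0"
    using laplace_expansion_row[of "U * M" n 0] U M n by simp
  then show ?thesis using det_mult[OF U M] \<open>det U = 1\<close> by simp
qed

lemma mat_delete_map_mat: "mat_delete (map_mat f A) i j = map_mat f (mat_delete A i j)"
  by (rule eq_matI) (auto simp: mat_delete_def)

lemma (in comm_ring_hom) hom_cofactor: "hom (cofactor A i j) = cofactor (map_mat hom A) i j"
  by (simp add: cofactor_def mat_delete_map_mat hom_distribs)

definition unit_row :: "'a::comm_ring_1 mat \<Rightarrow> nat \<Rightarrow> nat \<Rightarrow> 'a mat" where
  "unit_row M j i = mat (dim_row M) (dim_col M)
     (\<lambda>(a,b). if a = j then (if b = i then 1 else 0) else M $$ (a,b))"

lemma unit_row_carrier [simp]: "M \<in> carrier_mat n n \<Longrightarrow> unit_row M j i \<in> carrier_mat n n"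
  by (simp add: unit_row_def)

lemma unit_row_index:
  "M \<in> carrier_mat n n \<Longrightarrow> a < n \<Longrightarrow> b < n \<Longrightarrow>
    unit_row M j i $$ (a,b) = (if a = j then (if b = i then 1 else 0) else M $$ (a,b))"
  by (simp add: unit_row_def)

lemma det_unit_row:
  fixes M :: "'a::comm_ring_1 mat"
  assumes M: "M \<in> carrier_mat n n" and j: "j < n" and i: "i < n"
  shows "det (unit_row M j i) = cofactor M j i"
proof -
  let ?R = "unit_row M j i"
  have "mat_delete ?R j i = mat_delete M j i"
    using M by (intro eq_matI) (auto simp: mat_delete_def unit_row_def)
  then have cof: "cofactor ?R j i = cofactor M j i" by (simp add: cofactor_def)
  have "det ?R = (\<Sum>b<n. ?R $$ (j,b) * cofactor ?R j b)"
    by (rule laplace_expansion_row[OF unit_row_carrier[OF M] j])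
  also have "\<dots> = (\<Sum>b<n. if b = i then cofactor ?R j b else 0)"
    using M j by (intro sum.cong) (auto simp: unit_row_index)
  finally show ?thesis using i cof by simp
qed

lemma potential_le_card_moved:
  fixes D :: "'a \<Rightarrow> nat"
  assumes p: "p permutes S" and S: "finite S" and j: "j \<in> S" and Dj: "D j = 0"
    and step: "\<And>x. x \<in> S - {j} \<Longrightarrow> p x \<noteq> x \<Longrightarrow> D x \<le> D (p x) + 1"
  shows "D (p j) \<le> card {x \<in> S - {j}. p x \<noteq> x}"
proof -
  have "(\<Sum>x\<in>S. int (D (p x)) - int (D x)) = 0"
    using sum.permute[OF p, of "\<lambda>x. int (D x)"] by (simp add: sum_subtractf comp_def)
  then have "int (D (p j)) = (\<Sum>x\<in>S - {j}. int (D x) - int (D (p x)))"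
    using S j Dj by (simp add: sum.remove sum_subtractf)
  also have "\<dots> \<le> (\<Sum>x\<in>S - {j}. if p x \<noteq> x then 1 else 0)"
  proof (rule sum_mono)
    fix x assume "x \<in> S - {j}"
    then show "int (D x) - int (D (p x)) \<le> (if p x \<noteq> x then 1 else 0)"
      using step[of x] by (cases "p x = x") auto
  qed
  also have "\<dots> = int (card {x \<in> S - {j}. p x \<noteq> x})"
    using S by (simp add: sum.If_cases Int_def)
  finally show ?thesis by linarith
qed

lemma degree_perm_prod_le_potential:
  fixes M :: "'a::comm_ring_1 poly mat" and D :: "nat \<Rightarrow> nat"
  assumes p: "p permutes {0..<n}" and j: "j < n" and i: "i < n"
    and row_j: "\<And>b. b < n \<Longrightarrow> M $$ (j,b) = (if b = i then 1 else 0)"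
    and deg: "\<And>a b. a < n \<Longrightarrow> b < n \<Longrightarrow> a \<noteq> j \<Longrightarrow>
      degree (M $$ (a,b)) \<le> (if a = b then 1 else 0)"
    and pot: "\<And>a b. a < n \<Longrightarrow> b < n \<Longrightarrow> a \<noteq> j \<Longrightarrow> a \<noteq> b \<Longrightarrow> M $$ (a,b) \<noteq> 0 \<Longrightarrow>
      D a \<le> D b + 1"
    and Dj: "D j = 0"
  shows "degree (\<Prod>l = 0..<n. M $$ (l, p l)) \<le> n - 1 - D i"
proof (cases "\<forall>l<n. M $$ (l, p l) \<noteq> 0")
  case False
  then obtain l where "l < n" "M $$ (l, p l) = 0" by auto
  then have "(\<Prod>l = 0..<n. M $$ (l, p l)) = 0" by (intro prod_zero) auto
  then show ?thesis by simp
next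
  case True
  let ?S = "{0..<n} - {j}"
  have p_lt: "p l < n" if "l < n" for l using permutes_in_image[OF p] that by simp
  have "p j = i" using True row_j[OF p_lt[OF j]] j by (auto split: if_splits)
  have "D (p j) \<le> card {l \<in> ?S. p l \<noteq> l}"
  proof (rule potential_le_card_moved[where D = D and j = j, OF p])
    fix l assume "l \<in> ?S" "p l \<noteq> l"
    then show "D l \<le> D (p l) + 1" using pot[of l "p l"] True p_lt[of l] by auto
  qed (use j Dj in auto)
  then have "D i \<le> card {l \<in> ?S. p l \<noteq> l}" using \<open>p j = i\<close> by simp
  moreover have "card {l \<in> ?S. p l = l} + card {l \<in> ?S. p l \<noteq> l} = n - 1"
  proof -
    have "card ?S = card ({l \<in> ?S. p l = l} \<union> {l \<in> ?S. p l \<noteq> l})"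
      by (rule arg_cong[where f = card]) auto
    also have "\<dots> = card {l \<in> ?S. p l = l} + card {l \<in> ?S. p l \<noteq> l}"
      by (rule card_Un_disjoint) auto
    finally show ?thesis using j by simp
  qed
  moreover have "degree (\<Prod>l = 0..<n. M $$ (l, p l)) \<le> card {l \<in> ?S. p l = l}"
  proof -
    have "degree (\<Prod>l = 0..<n. M $$ (l, p l)) \<le> (\<Sum>l = 0..<n. degree (M $$ (l, p l)))"
      using degree_prod_sum_le[of "{0..<n}" "\<lambda>l. M $$ (l, p l)"] by (simp add: comp_def)
    also have "\<dots> = (\<Sum>l\<in>?S. degree (M $$ (l, p l)))"
      using j \<open>p j = i\<close> row_j[OF i] by (simp add: sum.remove[of "{0..<n}" j])
    also have "\<dots> \<le> (\<Sum>l\<in>?S. if p l = l then 1 else 0)"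
    proof (rule sum_mono)
      fix l assume "l \<in> ?S"
      then show "degree (M $$ (l, p l)) \<le> (if p l = l then 1 else 0)"
        using deg[of l "p l"] p_lt[of l] by auto
    qed
    also have "\<dots> = card {l \<in> ?S. p l = l}"
      by (simp add: sum.If_cases Int_def)
    finally show ?thesis .
  qed
  ultimately show ?thesis by linarith
qed

lemma degree_cofactor_le_potential:
  fixes M :: "'a::comm_ring_1 poly mat" and D :: "nat \<Rightarrow> nat"
  assumes M: "M \<in> carrier_mat n n" and j: "j < n" and i: "i < n"
    and deg: "\<And>a b. a < n \<Longrightarrow> b < n \<Longrightarrow> degree (M $$ (a,b)) \<le> (if a = b then 1 else 0)"
    and pot: "\<And>a b. a < n \<Longrightarrow> b < n \<Longrightarrow> a \<noteq> b \<Longrightarrow> M $$ (a,b) \<noteq> 0 \<Longrightarrow> D a \<le> D b + 1"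
    and Dj: "D j = 0"
  shows "degree (cofactor M j i) \<le> n - 1 - D i"
proof -
  let ?R = "unit_row M j i"
  have "degree (\<Prod>l = 0..<n. ?R $$ (l, p l)) \<le> n - 1 - D i" if p: "p permutes {0..<n}" for p
  proof (rule degree_perm_prod_le_potential[where D = D, OF p j i _ _ _ Dj])
    fix b assume "b < n"
    then show "?R $$ (j,b) = (if b = i then 1 else 0)" using j by (simp add: unit_row_index[OF M])
  next
    fix a b assume "a < n" "b < n" "a \<noteq> j"
    then show "degree (?R $$ (a,b)) \<le> (if a = b then 1 else 0)"
      using deg by (simp add: unit_row_index[OF M])
  next
    fix a b assume "a < n" "b < n" "a \<noteq> j" "a \<noteq> b" "?R $$ (a,b) \<noteq> 0"
    then show "D a \<le> D b + 1" using pot by (simp add: unit_row_index[OF M])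
  qed
  then show ?thesis
    unfolding det_unit_row[OF M j i, symmetric] det_def'[OF unit_row_carrier[OF M]]
    by (intro degree_sum_le) (auto simp: finite_permutations)
qed

lemma char_poly_matrix_index:
  "A \<in> carrier_mat n n \<Longrightarrow> a < n \<Longrightarrow> b < n \<Longrightarrow>
    char_poly_matrix A $$ (a,b) = (if a = b then [:0,1:] else 0) - [:A $$ (a,b):]"
  by (auto simp: char_poly_matrix_def)

lemma mat_delete_char_poly_matrix:
  assumes "A \<in> carrier_mat n n" "i < n"
  shows "mat_delete (char_poly_matrix A) i i = char_poly_matrix (mat_delete A i i)"
  using assms by (intro eq_matI) (auto simp: mat_delete_def char_poly_matrix_def)

section \<open>Spanning in-trees and shortest paths\<close>

text \<open>The matrix dI - A of the model whose only edges are x \<rightarrow> parent x, all of rate 1,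
  and whose only leak, of rate c, is at the root \<rho>.\<close>

definition tree_matrix :: "nat \<Rightarrow> nat \<Rightarrow> (nat \<Rightarrow> nat) \<Rightarrow> int \<Rightarrow> int poly mat" where
  "tree_matrix n \<rho> parent c = mat n n (\<lambda>(a,b).
     if a = b then (if a = \<rho> then [:c,1:] else [:1,1:])
     else if b \<noteq> \<rho> \<and> a = parent b then -1 else 0)"

lemma tree_matrix_carrier [simp]: "tree_matrix n \<rho> parent c \<in> carrier_mat n n"
  by (simp add: tree_matrix_def)

locale rooted_tree =
  fixes n \<rho> :: nat and parent depth :: "nat \<Rightarrow> nat"
  assumes root_lt: "\<rho> < n" and depth_root: "depth \<rho> = 0"
    and parent_lt: "\<And>x. x < n \<Longrightarrow> x \<noteq> \<rho> \<Longrightarrow> parent x < n"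
    and depth_parent: "\<And>x. x < n \<Longrightarrow> x \<noteq> \<rho> \<Longrightarrow> depth x = Suc (depth (parent x))"
begin

lemma depth_eq_0_iff: "x < n \<Longrightarrow> depth x = 0 \<longleftrightarrow> x = \<rho>"
  using depth_parent depth_root by force

lemma depth_lt: assumes "x < n" shows "depth x < n"
proof -
  have "{0..depth x} \<subseteq> depth ` {0..<n}" if "x < n" for x
    using that
  proof (induction "depth x" arbitrary: x)
    case 0
    then show ?case by force
  next
    case (Suc k)
    then have "x \<noteq> \<rho>" using depth_root by auto
    then have "{0..k} \<subseteq> depth ` {0..<n}"
      using Suc.hyps Suc.prems depth_parent[of x] parent_lt[of x] by simp
    moreover have "Suc k \<in> depth ` {0..<n}" using Suc by (metis atLeastLessThan_iff image_eqI le0)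
    moreover have "{0..depth x} = insert (Suc k) {0..k}" using Suc(2) by auto
    ultimately show ?case by simp
  qed
  then have "card {0..depth x} \<le> card (depth ` {0..<n})"
    using assms by (intro card_mono) auto
  also have "\<dots> \<le> n" using card_image_le[of "{0..<n}" depth] by simp
  finally show ?thesis by simp
qed

lemma depth_parent_less: "x < n \<Longrightarrow> x \<noteq> \<rho> \<Longrightarrow> depth (parent x) < depth x"
  using depth_parent[of x] by simp

lemma tree_matrix_col:
  assumes "a < n" "b < n" "b \<noteq> \<rho>"
  shows "tree_matrix n \<rho> parent c $$ (a,b) =
    (if a = b then [:1,1:] else 0) + (if a = parent b then -1 else 0)"
proof -
  have "parent b \<noteq> b" using assms depth_parent[of b] by auto
  then show ?thesis using assms by (auto simp: tree_matrix_def)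
qed

lemma tree_matrix_col_root:
  "a < n \<Longrightarrow> tree_matrix n \<rho> parent c $$ (a,\<rho>) = (if a = \<rho> then [:c,1:] else 0)"
  using root_lt by (simp add: tree_matrix_def)

lemma det_tree_matrix: "det (tree_matrix n \<rho> parent c) = [:c,1:] * [:1,1:] ^ (n - 1)"
proof -
  have "det (tree_matrix n \<rho> parent c) = (\<Prod>l = 0..<n. tree_matrix n \<rho> parent c $$ (l,l))"
    by (rule det_eq_prod_diag_if_rank_increasing[where r = depth])
      (auto simp: tree_matrix_def depth_parent_less split: if_splits)
  also have "\<dots> = [:c,1:] * (\<Prod>l\<in>{0..<n} - {\<rho>}. [:1,1:])"
    using root_lt by (simp add: prod.remove[of _ \<rho>] tree_matrix_def)
  finally show ?thesis using root_lt by simp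
qed

lemma cofactor_tree_matrix_root:
  "cofactor (tree_matrix n \<rho> parent c) \<rho> \<rho> = [:1,1:] ^ (n - 1)"
proof -
  let ?T = "tree_matrix n \<rho> parent c"
  have "(\<Sum>a<n. ?T $$ (a,\<rho>) * cofactor ?T a \<rho>) = [:c,1:] * cofactor ?T \<rho> \<rho>"
    using root_lt by (simp add: tree_matrix_col_root if_distrib[of "\<lambda>x. x * _"] cong: if_cong)
  then have "[:c,1:] * cofactor ?T \<rho> \<rho> = [:c,1:] * [:1,1:] ^ (n - 1)"
    using sum_col_mult_cofactor[OF tree_matrix_carrier root_lt root_lt] det_tree_matrix by simp
  then show ?thesis by (rule mult_left_cancel[THEN iffD1, rotated]) simp
qed

lemma cofactor_tree_matrix:
  assumes "x < n"
  shows "cofactor (tree_matrix n \<rho> parent c) x \<rho> = [:1,1:] ^ (n - 1 - depth x)"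
  using assms
proof (induction "depth x" arbitrary: x)
  case 0
  then have "x = \<rho>" using depth_eq_0_iff by simp
  then show ?case using cofactor_tree_matrix_root depth_root by simp
next
  case (Suc k)
  let ?T = "tree_matrix n \<rho> parent c"
  have "x \<noteq> \<rho>" using Suc.hyps(2) depth_root by auto
  then have x: "x \<noteq> \<rho>" "parent x < n" "depth (parent x) = k"
    using Suc.hyps(2) Suc.prems depth_parent[of x] parent_lt[of x] by auto
  have "(\<Sum>a<n. ?T $$ (a,x) * cofactor ?T a \<rho>) = 0"
    using sum_col_mult_cofactor[OF tree_matrix_carrier Suc.prems root_lt] x by simp
  moreover have "(\<Sum>a<n. ?T $$ (a,x) * cofactor ?T a \<rho>)
      = [:1,1:] * cofactor ?T x \<rho> - cofactor ?T (parent x) \<rho>"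
    using Suc.prems x by (simp add: tree_matrix_col distrib_right sum.distrib
        if_distrib[of "\<lambda>y. y * _"] cong: if_cong)
  ultimately have "[:1,1:] * cofactor ?T x \<rho> = cofactor ?T (parent x) \<rho>"
    by (metis eq_iff_diff_eq_0)
  also have "\<dots> = [:1,1:] ^ (n - 1 - k)"
    using Suc.hyps(1)[OF x(3)[symmetric] x(2)] x(3) by simp
  also have "\<dots> = [:1,1:] * [:1,1:] ^ (n - 1 - depth x)"
    using depth_lt[OF Suc.prems] Suc.hyps(2) by (simp add: Suc_diff_Suc flip: power_Suc)
  finally show ?case by (rule mult_left_cancel[THEN iffD1, rotated]) simp
qed

end

lemma shortest_path_len_relpow: "(u,v) \<in> E\<^sup>* \<Longrightarrow> (u,v) \<in> E ^^ shortest_path_len E u v"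
  unfolding shortest_path_len_def by (rule LeastI_ex) (simp add: rtrancl_power)

lemma shortest_path_len_le: "(u,v) \<in> E ^^ k \<Longrightarrow> shortest_path_len E u v \<le> k"
  unfolding shortest_path_len_def by (rule Least_le)

lemma shortest_path_len_refl [simp]: "shortest_path_len E u u = 0"
  using shortest_path_len_le[where k = 0] by simp

lemma shortest_path_len_append_edge:
  "(u,v) \<in> E\<^sup>* \<Longrightarrow> (v,w) \<in> E \<Longrightarrow> shortest_path_len E u w \<le> Suc (shortest_path_len E u v)"
  by (intro shortest_path_len_le relpow_Suc_I[OF shortest_path_len_relpow])

lemma shortest_path_first_edge:
  assumes uv: "(u,v) \<in> E\<^sup>*" and "u \<noteq> v"
  obtains w where "(u,w) \<in> E" "shortest_path_len E u v = Suc (shortest_path_len E w v)"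
proof -
  obtain k where k: "shortest_path_len E u v = Suc k"
    using shortest_path_len_relpow[OF uv] \<open>u \<noteq> v\<close> by (cases "shortest_path_len E u v") auto
  then obtain w where w: "(u,w) \<in> E" "(w,v) \<in> E ^^ k"
    using shortest_path_len_relpow[OF uv] by (metis relpow_Suc_D2)
  have "shortest_path_len E w v \<le> k" using w(2) by (rule shortest_path_len_le)
  moreover have "(u,v) \<in> E ^^ Suc (shortest_path_len E w v)"
    using w relpow_imp_rtrancl by (metis relpow_Suc_I2 shortest_path_len_relpow)
  then have "Suc k \<le> Suc (shortest_path_len E w v)"
    using k by (metis shortest_path_len_le)
  ultimately show ?thesis using that w(1) k by simp
qed

lemma exists_rooted_tree:
  assumes E: "E \<subseteq> {0..<n} \<times> {0..<n}" and sc: "strongly_connected n E" and \<rho>: "\<rho> < n"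
  obtains parent where "rooted_tree n \<rho> parent (\<lambda>x. shortest_path_len E x \<rho>)"
    and "\<And>x. x < n \<Longrightarrow> x \<noteq> \<rho> \<Longrightarrow> (x, parent x) \<in> E"
proof -
  have "\<exists>w. (x,w) \<in> E \<and> shortest_path_len E x \<rho> = Suc (shortest_path_len E w \<rho>)"
    if "x < n" "x \<noteq> \<rho>" for x
    using sc that \<rho> shortest_path_first_edge unfolding strongly_connected_def by metis
  then obtain parent where parent: "\<And>x. x < n \<Longrightarrow> x \<noteq> \<rho> \<Longrightarrow>
      (x, parent x) \<in> E \<and> shortest_path_len E x \<rho> = Suc (shortest_path_len E (parent x) \<rho>)"
    by metis
  have "parent x < n" if "x < n" "x \<noteq> \<rho>" for x
    using parent[OF that] E by auto
  then have "rooted_tree n \<rho> parent (\<lambda>x. shortest_path_len E x \<rho>)"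
    by unfold_locales (use \<rho> parent in auto)
  with parent show ?thesis using that by blast
qed

section \<open>The operator matrix of a compartmental model\<close>

lemma comp_matrix_carrier [simp]: "comp_matrix n E Lk \<in> carrier_mat n n"
  by (simp add: comp_matrix_def)

lemma op_matrix_carrier [simp]: "op_matrix n E Lk \<in> carrier_mat n n"
  by (simp add: op_matrix_def)

lemma comp_matrix_dims [simp]: "dim_row (comp_matrix n E Lk) = n" "dim_col (comp_matrix n E Lk) = n"
  by (simp_all add: comp_matrix_def)

lemma op_matrix_dims [simp]: "dim_row (op_matrix n E Lk) = n" "dim_col (op_matrix n E Lk) = n"
  by (simp_all add: op_matrix_def)

lemma op_matrix_eq_char_poly_matrix: "op_matrix n E Lk = char_poly_matrix (comp_matrix n E Lk)"
  by (rule eq_matI) (auto simp: op_matrix_def char_poly_matrix_def comp_matrix_def monom_Suc)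

lemma ppoly_eval_comp_matrix:
  assumes "a < n" "b < n"
  shows "ppoly_eval v (comp_matrix n E Lk $$ (a,b)) =
    (if a = b then - (\<Sum>k\<in>{k. (a,k) \<in> E}. v (EdgeP k a)) - (if a \<in> Lk then v (LeakP a) else 0)
     else if (b,a) \<in> E then v (EdgeP a b) else 0)"
  using assms by (simp add: comp_matrix_def ppoly_eval.hom_uminus ppoly_eval.hom_minus
      ppoly_eval.hom_sum if_distrib[of "ppoly_eval v"])

lemma map_op_matrix:
  "map_mat (map_poly (ppoly_eval v)) (op_matrix n E Lk) =
    char_poly_matrix (map_mat (ppoly_eval v) (comp_matrix n E Lk))"
  unfolding op_matrix_eq_char_poly_matrix
  by (rule ppoly_eval.char_poly_matrix_hom[symmetric, where n = n]) simp

lemma map_op_matrix_index: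
  assumes "a < n" "b < n"
  shows "map_poly (ppoly_eval v) (op_matrix n E Lk $$ (a,b)) =
    (if a = b then [:0,1:] else 0) - [:ppoly_eval v (comp_matrix n E Lk $$ (a,b)):]"
proof -
  have "map_mat (ppoly_eval v) (comp_matrix n E Lk) \<in> carrier_mat n n" by simp
  then have "map_mat (map_poly (ppoly_eval v)) (op_matrix n E Lk) $$ (a,b) =
      (if a = b then [:0,1:] else 0) - [:ppoly_eval v (comp_matrix n E Lk $$ (a,b)):]"
    using assms by (simp add: map_op_matrix char_poly_matrix_index[OF _ assms])
  then show ?thesis using assms by simp
qed

lemma op_matrix_at_zero:
  "map_mat (map_poly (ppoly_eval (\<lambda>_. 0))) (op_matrix n E Lk) = [:0,1:] \<cdot>\<^sub>m 1\<^sub>m n"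
proof (rule eq_matI)
  fix a b assume "a < dim_row ([:0,1:] \<cdot>\<^sub>m 1\<^sub>m n)" "b < dim_col ([:0,1:] \<cdot>\<^sub>m 1\<^sub>m n)"
  then show "map_mat (map_poly (ppoly_eval (\<lambda>_. 0))) (op_matrix n E Lk) $$ (a,b)
      = ([:0,1:] \<cdot>\<^sub>m 1\<^sub>m n) $$ (a,b)"
    by (auto simp: map_op_matrix_index ppoly_eval_comp_matrix)
qed simp_all

definition tree_point :: "nat \<Rightarrow> (nat \<Rightarrow> nat) \<Rightarrow> int \<Rightarrow> param \<Rightarrow> int" where
  "tree_point \<rho> parent c p = (case p of
     EdgeP a b \<Rightarrow> if b \<noteq> \<rho> \<and> a = parent b then 1 else 0
   | LeakP l \<Rightarrow> if l = \<rho> then c else 0)"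

lemma tree_point_EdgeP:
  "tree_point \<rho> parent c (EdgeP a b) = (if b \<noteq> \<rho> \<and> a = parent b then 1 else 0)"
  by (simp add: tree_point_def)

lemma tree_point_LeakP: "tree_point \<rho> parent c (LeakP l) = (if l = \<rho> then c else 0)"
  by (simp add: tree_point_def)

lemma op_matrix_at_tree_point:
  assumes E: "E \<subseteq> {0..<n} \<times> {0..<n}"
    and parent_edge: "\<And>x. x < n \<Longrightarrow> x \<noteq> \<rho> \<Longrightarrow> (x, parent x) \<in> E"
  shows "map_mat (map_poly (ppoly_eval (tree_point \<rho> parent c))) (op_matrix n E Lk)
    = tree_matrix n \<rho> parent (if \<rho> \<in> Lk then c else 0)"
proof (rule eq_matI)
  fix a b
  assume "a < dim_row (tree_matrix n \<rho> parent (if \<rho> \<in> Lk then c else 0))"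
    and "b < dim_col (tree_matrix n \<rho> parent (if \<rho> \<in> Lk then c else 0))"
  then have ab: "a < n" "b < n" by (simp_all add: tree_matrix_def)
  have "finite {k. (a,k) \<in> E}" by (rule finite_subset[of _ "{0..<n}"]) (use E in auto)
  then have outflow: "(\<Sum>k\<in>{k. (a,k) \<in> E}. tree_point \<rho> parent c (EdgeP k a))
      = (if a = \<rho> then 0 else 1)"
    using parent_edge[OF ab(1)] by (cases "a = \<rho>") (simp_all add: tree_point_EdgeP)
  show "map_mat (map_poly (ppoly_eval (tree_point \<rho> parent c))) (op_matrix n E Lk) $$ (a,b)
      = tree_matrix n \<rho> parent (if \<rho> \<in> Lk then c else 0) $$ (a,b)"
  proof (cases "a = b")
    case True
    have "ppoly_eval (tree_point \<rho> parent c) (comp_matrix n E Lk $$ (a,a))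
        = - (if a = \<rho> then 0 else 1) - (if a \<in> Lk \<and> a = \<rho> then c else 0)"
      using ab by (auto simp: ppoly_eval_comp_matrix outflow tree_point_LeakP)
    then show ?thesis using ab True
      by (cases "a = \<rho>") (simp_all add: map_op_matrix_index tree_matrix_def)
  next
    case False
    then show ?thesis using ab parent_edge[of b]
      by (auto simp: map_op_matrix_index ppoly_eval_comp_matrix tree_matrix_def tree_point_EdgeP)
  qed
qed (simp_all add: tree_matrix_def)

lemma det_op_matrix_monic:
  "degree (det (op_matrix n E Lk)) = n \<and> coeff (det (op_matrix n E Lk)) n = 1"
  using degree_monic_char_poly[OF comp_matrix_carrier]
  by (simp add: char_poly_def op_matrix_eq_char_poly_matrix)

lemma det_op_matrix_at_zero:
  "map_poly (ppoly_eval (\<lambda>_. 0)) (det (op_matrix n E Lk)) = [:0,1:] ^ n"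
  using op_matrix_at_zero by (simp flip: ppoly_eval_poly.hom_det)

lemma cofactor_op_matrix_at_zero:
  assumes "i < n" "j < n"
  shows "map_poly (ppoly_eval (\<lambda>_. 0)) (cofactor (op_matrix n E Lk) j i)
    = (if j = i then [:0,1:] ^ (n - 1) else 0)"
  using op_matrix_at_zero cofactor_smult_one_mat[of "[:0,1:]" i n j] assms
  by (simp add: ppoly_eval_poly.hom_cofactor)

lemma det_op_matrix_at_tree_point:
  assumes E: "E \<subseteq> {0..<n} \<times> {0..<n}" and tree: "rooted_tree n \<rho> parent depth"
    and edge: "\<And>x. x < n \<Longrightarrow> x \<noteq> \<rho> \<Longrightarrow> (x, parent x) \<in> E"
  shows "map_poly (ppoly_eval (tree_point \<rho> parent c)) (det (op_matrix n E Lk))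
    = [:if \<rho> \<in> Lk then c else 0, 1:] * [:1,1:] ^ (n - 1)"
  using op_matrix_at_tree_point[OF E edge, where c = c and Lk = Lk]
    rooted_tree.det_tree_matrix[OF tree]
  by (simp flip: ppoly_eval_poly.hom_det)

lemma cofactor_op_matrix_at_tree_point:
  assumes E: "E \<subseteq> {0..<n} \<times> {0..<n}" and tree: "rooted_tree n \<rho> parent depth"
    and edge: "\<And>x. x < n \<Longrightarrow> x \<noteq> \<rho> \<Longrightarrow> (x, parent x) \<in> E" and x: "x < n"
  shows "map_poly (ppoly_eval (tree_point \<rho> parent c)) (cofactor (op_matrix n E Lk) x \<rho>)
    = [:1,1:] ^ (n - 1 - depth x)"
  using op_matrix_at_tree_point[OF E edge, where c = c and Lk = Lk]
    rooted_tree.cofactor_tree_matrix[OF tree x]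
  by (simp add: ppoly_eval_poly.hom_cofactor)

lemma degree_cofactor_op_matrix:
  assumes sc: "strongly_connected n E" and i: "i < n" and j: "j < n"
  shows "degree (cofactor (op_matrix n E Lk) j i) \<le> n - 1 - shortest_path_len E j i"
proof (rule degree_cofactor_le_potential[OF op_matrix_carrier j i])
  fix a b assume "a < n" "b < n"
  then show "degree (op_matrix n E Lk $$ (a,b)) \<le> (if a = b then 1 else 0)"
    by (auto simp: op_matrix_def degree_monom_eq intro: degree_diff_le)
next
  fix a b assume ab: "a < n" "b < n" "a \<noteq> b" "op_matrix n E Lk $$ (a,b) \<noteq> 0"
  then have "(b,a) \<in> E" by (auto simp: op_matrix_def comp_matrix_def split: if_splits)
  then show "shortest_path_len E j a \<le> shortest_path_len E j b + 1"
    using shortest_path_len_append_edge sc j ab unfolding strongly_connected_def by simp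
qed simp

lemma comp_matrix_col_sum_no_leak:
  assumes E: "E \<subseteq> {0..<n} \<times> {0..<n}" and loops: "\<forall>v. (v,v) \<notin> E" and b: "b < n"
  shows "(\<Sum>a<n. comp_matrix n E {} $$ (a,b)) = 0"
proof -
  let ?A = "comp_matrix n E {}"
  have "(\<Sum>a<n. ?A $$ (a,b)) = ?A $$ (b,b) + (\<Sum>a\<in>{..<n} - {b}. ?A $$ (a,b))"
    using b by (simp add: sum.remove)
  also have "(\<Sum>a\<in>{..<n} - {b}. ?A $$ (a,b))
      = (\<Sum>a\<in>{..<n} - {b}. if (b,a) \<in> E then pvar (EdgeP a b) else 0)"
    using b by (intro sum.cong) (auto simp: comp_matrix_def)
  also have "\<dots> = (\<Sum>a\<in>{a\<in>{..<n} - {b}. (b,a) \<in> E}. pvar (EdgeP a b))"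
    by (rule sum.inter_filter[symmetric]) simp
  also have "{a\<in>{..<n} - {b}. (b,a) \<in> E} = {k. (b,k) \<in> E}" using E loops by auto
  finally show ?thesis using b by (simp add: comp_matrix_def)
qed

lemma coeff_0_det_op_matrix_no_leak:
  assumes n: "n \<ge> 1" and E: "E \<subseteq> {0..<n} \<times> {0..<n}" and loops: "\<forall>v. (v,v) \<notin> E"
  shows "coeff (det (op_matrix n E {})) 0 = 0"
proof -
  have eval_at_0: "comm_ring_hom (\<lambda>p :: ppoly poly. poly p 0)"
    by unfold_locales auto
  let ?A = "comp_matrix n E {}"
  have "poly (det (op_matrix n E {})) 0 = det (map_mat (\<lambda>p. poly p 0) (op_matrix n E {}))"
    by (rule comm_ring_hom.hom_det[OF eval_at_0, symmetric])
  also have "\<dots> = 0"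
  proof (intro det_eq_0_if_col_sums_0[where n = n])
    fix b assume b: "b < n"
    have "map_mat (\<lambda>p. poly p 0) (op_matrix n E {}) $$ (a,b) = - ?A $$ (a,b)" if "a < n" for a
      using that b by (simp add: op_matrix_def poly_monom)
    then show "(\<Sum>a<n. map_mat (\<lambda>p. poly p 0) (op_matrix n E {}) $$ (a,b)) = 0"
      using comp_matrix_col_sum_no_leak[OF E loops b] by (simp add: sum_negf)
  qed (use n in auto)
  finally show ?thesis by (simp add: poly_0_coeff_0)
qed

lemma cofactor_op_matrix_diag_monic:
  assumes "i < n"
  shows "degree (cofactor (op_matrix n E Lk) i i) = n - 1
    \<and> coeff (cofactor (op_matrix n E Lk) i i) (n - 1) = 1"
proof -
  have "cofactor (op_matrix n E Lk) i i = char_poly (mat_delete (comp_matrix n E Lk) i i)"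
    by (simp add: cofactor_def char_poly_def op_matrix_eq_char_poly_matrix
        mat_delete_char_poly_matrix[OF comp_matrix_carrier assms] flip: mult_2 power_mult)
  then show ?thesis
    using degree_monic_char_poly[OF mat_delete_carrier[OF comp_matrix_carrier]] by simp
qed

section \<open>Counting non-constant coefficients\<close>

lemma coeff_linear_mult_power_ne_0:
  fixes c :: int
  assumes c: "0 \<le> c" and k: "k \<le> Suc m" and pos: "0 < c \<or> 0 < k"
  shows "coeff ([:c,1:] * [:1,1:] ^ m) k \<noteq> 0"
proof -
  let ?q = "[:1,1:] ^ m :: int poly"
  have q_pos: "0 < coeff ?q l" if "l \<le> m" for l
    using that by (simp add: coeff_linear_poly_power)
  have q_nonneg: "0 \<le> coeff ?q l" for l
    using q_pos[of l] coeff_eq_0[of ?q l] by (cases "l \<le> m") (auto simp: degree_linear_power)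
  have "coeff ([:c,1:] * ?q) k = c * coeff ?q k + (case k of 0 \<Rightarrow> 0 | Suc l \<Rightarrow> coeff ?q l)"
    by (simp add: coeff_pCons split: nat.split)
  also have "\<dots> > 0"
  proof (cases k)
    case 0
    then show ?thesis using pos q_pos[of 0] by simp
  next
    case (Suc l)
    then show ?thesis using c k q_pos[of l] q_nonneg[of k] by (simp add: add_nonneg_pos)
  qed
  finally show ?thesis by simp
qed

lemma coeff_x_power: "coeff ([:0,1:] ^ n :: 'a::comm_semiring_1 poly) k = (if k = n then 1 else 0)"
proof -
  have "[:0,1:] = (monom 1 1 :: 'a poly)" by (simp add: monom_Suc)
  then show ?thesis by (simp add: monom_power coeff_monom)
qed

lemma num_nonconst_det_op_matrix:
  assumes n: "n \<ge> 1" and E: "E \<subseteq> {0..<n} \<times> {0..<n}" and loops: "\<forall>v. (v,v) \<notin> E"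
    and Lk: "Lk \<subseteq> {0..<n}" and sc: "strongly_connected n E"
  shows "num_nonconst (det (op_matrix n E Lk)) = (if Lk \<noteq> {} then n else n - 1)"
proof -
  let ?P = "det (op_matrix n E Lk)"
  define \<rho> where "\<rho> = (if Lk = {} then 0 else (SOME x. x \<in> Lk))"
  have "Lk \<noteq> {} \<Longrightarrow> \<rho> \<in> Lk" "Lk = {} \<Longrightarrow> \<rho> = 0"
    by (simp_all add: \<rho>_def some_in_eq)
  then have \<rho>: "\<rho> < n" "\<rho> \<in> Lk \<longleftrightarrow> Lk \<noteq> {}"
    using n Lk by (cases "Lk = {}"; force)+
  obtain parent where tree: "rooted_tree n \<rho> parent (\<lambda>x. shortest_path_len E x \<rho>)"
    and edge: "\<And>x. x < n \<Longrightarrow> x \<noteq> \<rho> \<Longrightarrow> (x, parent x) \<in> E"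
    using exists_rooted_tree[OF E sc \<rho>(1)] by blast
  have "nonconst (coeff ?P k) \<longleftrightarrow> (if Lk \<noteq> {} then 0 else 1) \<le> k \<and> k < n" for k
  proof (cases "k < n")
    case True
    show ?thesis
    proof (cases "Lk = {} \<and> k = 0")
      case True
      then show ?thesis using coeff_0_det_op_matrix_no_leak[OF n E loops] by auto
    next
      case False
      then have "coeff (map_poly (ppoly_eval (tree_point \<rho> parent 1)) ?P) k
          \<noteq> coeff (map_poly (ppoly_eval (\<lambda>_. 0)) ?P) k"
        using coeff_linear_mult_power_ne_0[of "if Lk \<noteq> {} then 1 else 0" k "n - 1"] \<open>k < n\<close> \<rho>(2)
        by (auto simp: det_op_matrix_at_tree_point[OF E tree edge] det_op_matrix_at_zero
            coeff_x_power)
      then show ?thesis using nonconst_coeff_if_evals_differ False \<open>k < n\<close> by auto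
    qed
  next
    case False
    then have "coeff ?P k = 0 \<or> coeff ?P k = 1"
      using det_op_matrix_monic[of n E Lk] coeff_eq_0[of ?P k] by (cases "k = n") auto
    then show ?thesis using False by auto
  qed
  then have "num_nonconst ?P = n - (if Lk \<noteq> {} then 0 else 1)" by (rule num_nonconst_eqI)
  then show ?thesis by simp
qed

lemma num_nonconst_cofactor_op_matrix:
  assumes E: "E \<subseteq> {0..<n} \<times> {0..<n}" and sc: "strongly_connected n E"
    and i: "i < n" and j: "j < n"
  shows "num_nonconst (cofactor (op_matrix n E Lk) j i)
    = (if i = j then n - 1 else n - shortest_path_len E j i)"
proof -
  let ?Q = "cofactor (op_matrix n E Lk) j i" and ?L = "shortest_path_len E j i"
  obtain parent where tree: "rooted_tree n i parent (\<lambda>x. shortest_path_len E x i)"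
    and edge: "\<And>x. x < n \<Longrightarrow> x \<noteq> i \<Longrightarrow> (x, parent x) \<in> E"
    using exists_rooted_tree[OF E sc i] by blast
  have L: "?L < n" using rooted_tree.depth_lt[OF tree j] by simp
  have "nonconst (coeff ?Q k) \<longleftrightarrow> 0 \<le> k \<and> k < (if i = j then n - 1 else n - ?L)" for k
  proof (cases "k < (if i = j then n - 1 else n - ?L)")
    case True
    then have "coeff (map_poly (ppoly_eval (tree_point i parent 0)) ?Q) k
        \<noteq> coeff (map_poly (ppoly_eval (\<lambda>_. 0)) ?Q) k"
      using L by (auto simp: cofactor_op_matrix_at_tree_point[OF E tree edge j]
          cofactor_op_matrix_at_zero[OF i j] coeff_x_power coeff_linear_poly_power split: if_splits)
    then show ?thesis using nonconst_coeff_if_evals_differ True by auto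
  next
    case False
    have "coeff ?Q k = 0 \<or> coeff ?Q k = 1"
    proof (cases "i = j")
      case True
      then show ?thesis
        using False cofactor_op_matrix_diag_monic[OF i, of E Lk] coeff_eq_0[of ?Q k]
        by (cases "k = n - 1") auto
    next
      case False
      then show ?thesis
        using \<open>\<not> k < _\<close> degree_cofactor_op_matrix[OF sc i j, of Lk] coeff_eq_0[of ?Q k] L by auto
    qed
    then show ?thesis using False by auto
  qed
  then have "num_nonconst ?Q = (if i = j then n - 1 else n - ?L) - 0" by (rule num_nonconst_eqI)
  then show ?thesis by simp
qed

theorem corollary3p4:
  fixes n :: nat and E :: "(nat \<times> nat) set" and Lk :: "nat set" and i j :: nat
  assumes "n \<ge> 1"
    and "E \<subseteq> {0..<n} \<times> {0..<n}"
    and "\<forall>v. (v,v) \<notin> E"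
    and "Lk \<subseteq> {0..<n}"
    and "strongly_connected n E"
    and "i < n" and "j < n"
  shows "num_nonconst (det (op_matrix n E Lk)) = (if Lk \<noteq> {} then n else n - 1)
    \<and> num_nonconst ((-1) ^ (i + j) * det (mat_delete (op_matrix n E Lk) j i))
        = (if i = j then n - 1 else n - shortest_path_len E j i)"
proof -
  have "(-1) ^ (i + j) * det (mat_delete (op_matrix n E Lk) j i) = cofactor (op_matrix n E Lk) j i"
    by (simp add: cofactor_def add.commute)
  then show ?thesis
    using num_nonconst_det_op_matrix[OF assms(1-5)] num_nonconst_cofactor_op_matrix[OF assms(2,5-7)]
    by simp
qed

end
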